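(* Let $(X,\pi)$ be a symmetric two-player game with relative payoff function $\Delta$. If $X$ is compact and $\Delta$ is upper semicontinuous and additively separable, then imitation is essentially unbeatable.
   Context: A symmetric two-player game $(X,\pi)$: common action set $X$ (here a topological space) and bounded payoff $\pi:X\times X\to\mathbb{R}$, $\pi(x,y)$ = payoff of the player choosing $x$ against $y$. Relative payoff: $\Delta(x,y)=\pi(x,y)-\pi(y,x)$; it is additively separable if $\Delta(x,y)=f(x)+g(y)$ for some functions $f,g:X\to\mathbb{R}$. Let $\hat\Delta:=\max_{x,y\in X}\Delta(x,y)$. Imitate-the-best: given initial $y_0\in X$ and any opponent sequence $(x_t)_{t\ge0}$ in $X$, $y_t=x_{t-1}$ if $\Delta(x_{t-1},y_{t-1})>0$ and $y_t=y_{t-1}$ otherwise. Imitation is essentially unbeatable if for every $y_0\in X$ and every sequence $(x_t)$, $\limsup_{T\to\infty}\sum_{t=0}^T\Delta(x_t,y_t)\le\hat\Delta$. *)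

theory Defs
  imports "HOL-Analysis.Analysis"
begin

definition rel_payoff :: "('a \<Rightarrow> 'a \<Rightarrow> real) \<Rightarrow> 'a \<Rightarrow> 'a \<Rightarrow> real" where
  "rel_payoff \<pi> x y = \<pi> x y - \<pi> y x"

definition upper_semicont :: "('b::topological_space \<Rightarrow> real) \<Rightarrow> bool" where
  "upper_semicont f \<longleftrightarrow> (\<forall>c. open {p. f p < c})"

definition additively_separable :: "('a \<Rightarrow> 'a \<Rightarrow> real) \<Rightarrow> bool" where
  "additively_separable D \<longleftrightarrow> (\<exists>f g. \<forall>x y. D x y = f x + g y)"

text \<open>Maximal relative payoff (attained under the hypotheses of the theorem).\<close>
definition max_rel_payoff :: "('a \<Rightarrow> 'a \<Rightarrow> real) \<Rightarrow> real" where
  "max_rel_payoff D = (SUP p\<in>UNIV. D (fst p) (snd p))"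

primrec imitate :: "('a \<Rightarrow> 'a \<Rightarrow> real) \<Rightarrow> 'a \<Rightarrow> (nat \<Rightarrow> 'a) \<Rightarrow> nat \<Rightarrow> 'a" where
  "imitate D y0 xs 0 = y0"
| "imitate D y0 xs (Suc t) =
     (if D (xs t) (imitate D y0 xs t) > 0 then xs t else imitate D y0 xs t)"

definition essentially_unbeatable :: "('a \<Rightarrow> 'a \<Rightarrow> real) \<Rightarrow> bool" where
  "essentially_unbeatable D \<longleftrightarrow>
     (\<forall>y0 xs. limsup (\<lambda>T. ereal (\<Sum>t\<le>T. D (xs t) (imitate D y0 xs t)))
               \<le> ereal (max_rel_payoff D))"

end

theory Submission
  imports Defs
begin

text \<open>A separable relative payoff vanishes on the diagonal, so it is a potential difference
  \<open>\<Delta>(x,y) = f x - f y\<close>. Imitate-the-best only switches to \<open>x\<close> when \<open>\<Delta>(x,y) > 0\<close>,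
  i.e. when \<open>f\<close> increases, so in every round the opponent's relative payoff is at most the
  increase of \<open>f\<close> along the imitator's path. The cumulative relative payoff therefore
  telescopes to at most \<open>f y\<^sub>T\<^sub>+\<^sub>1 - f y\<^sub>0 = \<Delta>(y\<^sub>T\<^sub>+\<^sub>1, y\<^sub>0) \<le> \<Delta>\<close>.\<close>

lemma rel_payoff_self [simp]: "rel_payoff \<pi> x x = 0"
  by (simp add: rel_payoff_def)

lemma additively_separable_potential:
  assumes "additively_separable D" and "\<And>x. D x x = 0"
  obtains f where "\<And>x y. D x y = f x - f y"
proof -
  obtain f g where fg: "\<And>x y. D x y = f x + g y"
    using assms(1) unfolding additively_separable_def by blast
  have "g y = - f y" for y
    using fg[of y y] assms(2)[of y] by simp
  then show ?thesis
    using fg that by simp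
qed

lemma bdd_above_rel_payoff:
  assumes "\<And>x y. \<bar>\<pi> x y\<bar> \<le> B"
  shows "bdd_above (range (\<lambda>p. rel_payoff \<pi> (fst p) (snd p)))"
proof (rule bdd_aboveI)
  fix r assume "r \<in> range (\<lambda>p. rel_payoff \<pi> (fst p) (snd p))"
  then obtain x y where "r = rel_payoff \<pi> x y" by auto
  then show "r \<le> 2 * B"
    using assms[of x y] assms[of y x] unfolding rel_payoff_def by linarith
qed

lemma le_max_rel_payoff:
  assumes "bdd_above (range (\<lambda>p. D (fst p) (snd p)))"
  shows "D x y \<le> max_rel_payoff D"
  using cSUP_upper[OF UNIV_I assms, of "(x, y)"] by (simp add: max_rel_payoff_def)

lemma sum_imitate_le_potential_gain:
  assumes potential: "\<And>x y. D x y = f x - f y"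
  shows "(\<Sum>t\<le>T. D (xs t) (imitate D y0 xs t)) \<le> D (imitate D y0 xs (Suc T)) y0"
proof -
  have step: "D (xs t) (imitate D y0 xs t)
      \<le> f (imitate D y0 xs (Suc t)) - f (imitate D y0 xs t)" for t
    by (auto simp: potential)
  show ?thesis
  proof (induction T)
    case 0
    then show ?case using step[of 0] by (simp add: potential)
  next
    case (Suc T)
    then show ?case using step[of "Suc T"] by (simp add: potential)
  qed
qed

text \<open>Compactness and upper semicontinuity only serve to make \<open>\<Delta>\<close> attain its supremum;
  the bound holds with the supremum itself.\<close>

theorem proposition3:
  fixes \<pi> :: "'a::topological_space \<Rightarrow> 'a \<Rightarrow> real"
  assumes bounded: "\<exists>B. \<forall>x y. \<bar>\<pi> x y\<bar> \<le> B"
    and compact: "compact (UNIV :: 'a set)"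
    and usc: "upper_semicont (\<lambda>p::'a \<times> 'a. rel_payoff \<pi> (fst p) (snd p))"
    and sep: "additively_separable (rel_payoff \<pi>)"
  shows "essentially_unbeatable (rel_payoff \<pi>)"
  unfolding essentially_unbeatable_def
proof (intro allI)
  fix y0 xs
  obtain f where f: "\<And>x y. rel_payoff \<pi> x y = f x - f y"
    using additively_separable_potential[OF sep rel_payoff_self] by blast
  obtain B where "\<And>x y. \<bar>\<pi> x y\<bar> \<le> B"
    using bounded by blast
  then have "\<And>x y. rel_payoff \<pi> x y \<le> max_rel_payoff (rel_payoff \<pi>)"
    by (intro le_max_rel_payoff bdd_above_rel_payoff)
  then have "(\<Sum>t\<le>T. rel_payoff \<pi> (xs t) (imitate (rel_payoff \<pi>) y0 xs t))
      \<le> max_rel_payoff (rel_payoff \<pi>)" for T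
    by (rule order_trans[OF sum_imitate_le_potential_gain[OF f]])
  then show "limsup (\<lambda>T. ereal (\<Sum>t\<le>T. rel_payoff \<pi> (xs t) (imitate (rel_payoff \<pi>) y0 xs t)))
      \<le> ereal (max_rel_payoff (rel_payoff \<pi>))"
    by (intro Limsup_bounded always_eventually allI) simp
qed

end
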